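(* Let $K$ be a commutative unital ring, $k<n$ in $\mathbb{N}^*$, and $\bar a,\bar b=(b_1,\dots,b_k),\bar c=(c_1,\dots,c_k)\in K^k$. Put $d_i:=b_ic_i$ ($1\le i\le k$), $\bar d:=(d_1,\dots,d_k)$, $d:=d_1\cdots d_k$, $U(i):=U_i(\pi^{\bar a,-\bar d}(k,k),d)$ for $i\in\mathbb{N}$, and write $n=mk+r$ with $0\le r<k$ (so $m\ge1$). Then \[\det T^k_n(\bar a,\bar b,\bar c)=U(m)\,\alpha^{\bar a,-\bar d}(k+r,k)-d\,U(m-1)\,\alpha^{\bar a,-\bar d}(r,k)\] \[=U(m+1)\,\alpha^{\bar a,-\bar d}(r,k)+d_kd_1\cdots d_r\,U(m)\,\alpha^{\bar a,-\bar d}_{r+1}(k-r-2,k).\] In particular, if $r=k-1$ then $\det T^k_{mk+k-1}(\bar a,\bar b,\bar c)=U(m+1)\,\det T^k_{k-1}(\bar a,\bar b,\bar c)=U(m+1)\alpha^{\bar a,-\bar d}(k-1,k)$.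
   Context: Vectors in $K^k$ are extended periodically ($a_{i+k}:=a_i$), $-\bar d$ componentwise. $T^k_n(\bar a,\bar b,\bar c)\in M_n(K)$ is the tridiagonal matrix with diagonal $a_1,\dots,a_n$, superdiagonal $b_1,\dots,b_{n-1}$, subdiagonal $c_1,\dots,c_{n-1}$, zeros elsewhere. $U_m(x,y):=\sum_{i=0}^{\lfloor (m-1)/2\rfloor}(-1)^i\binom{m-1-i}{i}x^{m-1-2i}y^i$ (so $U_0=0$, $U_1=1$). In $P=\mathbb{Z}[x_1,\dots,x_k,y_1,\dots,y_k]$, indices are periodic ($x_{i+k}:=x_i$, $y_{i+k}:=y_i$); shift $f_s:=f(x_{s+1},\dots,x_{s+k},y_{s+1},\dots,y_{s+k})$; for $\bar a,\bar e\in K^k$, $f^{\bar a,\bar e}$ is the image of $f$ under $x_i\mapsto a_i$, $y_i\mapsto e_i$, and $f_s^{\bar a,\bar e}:=(f_s)^{\bar a,\bar e}$. Write $[r]=\{1,\dots,r\}$, $S+1=\{s+1:s\in S\}$. For $0\le r\le k$, $\alpha(r,k):=\sum_{S}\prod_{i\in S}y_i\prod_{j\in[r]\setminus(S\cup(S+1))}x_j$ over subsets $S\subseteq\{1,\dots,r-1\}$ with no two consecutive integers; $\alpha(-1,k):=0$; for $r>k$, $\alpha(r,k):=x_r\alpha(r-1,k)+y_{r-1}\alpha(r-2,k)$; $\alpha_s(r,k):=(\alpha(r,k))_s$. $\beta(0,k)=\beta(1,k):=0$ and for $2\le r\le k+1$, $\beta(r,k):=\sum_S y_k\prod_{i\in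 S}y_i\prod_{j\in\{2,\dots,r-1\}\setminus(S\cup(S+1))}x_j$ over $S\subseteq\{2,\dots,r-2\}$ with no two consecutive integers. $\pi(r,k):=\alpha(r,k)+\beta(r,k)$ for $0\le r\le k$. *)

theory Defs
  imports "Jordan_Normal_Form.Determinant"
begin

text \<open>Vectors of K^k are functions nat => 'a whose values at 1..k are the entries;
  per k v is the periodic extension (v_(i+k) = v_i), 1-based indices.\<close>
definition per :: "nat \<Rightarrow> (nat \<Rightarrow> 'a) \<Rightarrow> nat \<Rightarrow> 'a" where
  "per k v i = v ((i + k - 1) mod k + 1)"

text \<open>Tridiagonal n x n matrix with diagonal a_1..a_n, superdiagonal b_1..b_(n-1),
  subdiagonal c_1..c_(n-1) (1-based sequences; matrix indices are 0-based).\<close>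
definition tridiag :: "nat \<Rightarrow> (nat \<Rightarrow> 'a::zero) \<Rightarrow> (nat \<Rightarrow> 'a) \<Rightarrow> (nat \<Rightarrow> 'a) \<Rightarrow> 'a mat" where
  "tridiag n a b c = mat n n (\<lambda>(i,j). if i = j then a (i+1)
      else if j = i + 1 then b (i+1) else if i = j + 1 then c (j+1) else 0)"

definition Tk :: "nat \<Rightarrow> nat \<Rightarrow> (nat \<Rightarrow> 'a::zero) \<Rightarrow> (nat \<Rightarrow> 'a) \<Rightarrow> (nat \<Rightarrow> 'a) \<Rightarrow> 'a mat" where
  "Tk k n a b c = tridiag n (per k a) (per k b) (per k c)"

definition Ucheb :: "nat \<Rightarrow> 'a::comm_ring_1 \<Rightarrow> 'a \<Rightarrow> 'a" where
  "Ucheb m x y = (if m = 0 then 0 else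
     (\<Sum>i\<in>{0..(m-1) div 2}. (-1)^i * of_nat ((m-1-i) choose i) * x^(m-1-2*i) * y^i))"

definition no_consec :: "nat set \<Rightarrow> bool" where
  "no_consec S \<longleftrightarrow> (\<forall>i\<in>S. Suc i \<notin> S)"

text \<open>alpha(r,k) for 0 <= r <= k, evaluated at x_i |-> x i, y_i |-> y i.\<close>
definition alpha_sum :: "(nat \<Rightarrow> 'a::comm_ring_1) \<Rightarrow> (nat \<Rightarrow> 'a) \<Rightarrow> nat \<Rightarrow> 'a" where
  "alpha_sum x y r = (\<Sum>S\<in>{S. S \<subseteq> {1..<r} \<and> no_consec S}.
      (\<Prod>i\<in>S. y i) * (\<Prod>j\<in>{1..r} - (S \<union> Suc ` S). x j))"

text \<open>alpha(r,k) for r >= 0, evaluated (x, y are the periodically extended evaluation sequences).\<close>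
function alphaN :: "nat \<Rightarrow> (nat \<Rightarrow> 'a::comm_ring_1) \<Rightarrow> (nat \<Rightarrow> 'a) \<Rightarrow> nat \<Rightarrow> 'a" where
  "alphaN k x y r = (if r \<le> k then alpha_sum x y r
     else x r * alphaN k x y (r - 1) + y (r - 1) * alphaN k x y (r - 2))"
  by auto
termination by (relation "measure (\<lambda>(k,x,y,r). r)") auto

definition alpha :: "nat \<Rightarrow> (nat \<Rightarrow> 'a::comm_ring_1) \<Rightarrow> (nat \<Rightarrow> 'a) \<Rightarrow> int \<Rightarrow> 'a" where
  "alpha k x y r = (if r < 0 then 0 else alphaN k x y (nat r))"

definition alpha_ev :: "nat \<Rightarrow> (nat \<Rightarrow> 'a::comm_ring_1) \<Rightarrow> (nat \<Rightarrow> 'a) \<Rightarrow> int \<Rightarrow> 'a" where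
  "alpha_ev k a e r = alpha k (per k a) (per k e) r"

definition alpha_shift_ev :: "nat \<Rightarrow> nat \<Rightarrow> (nat \<Rightarrow> 'a::comm_ring_1) \<Rightarrow> (nat \<Rightarrow> 'a) \<Rightarrow> int \<Rightarrow> 'a" where
  "alpha_shift_ev k s a e r = alpha k (\<lambda>i. per k a (s + i)) (\<lambda>i. per k e (s + i)) r"

definition beta_ev :: "nat \<Rightarrow> (nat \<Rightarrow> 'a::comm_ring_1) \<Rightarrow> (nat \<Rightarrow> 'a) \<Rightarrow> nat \<Rightarrow> 'a" where
  "beta_ev k a e r = (if r < 2 then 0 else
     (\<Sum>S\<in>{S. S \<subseteq> {2..<r-1} \<and> no_consec S}.
        e k * (\<Prod>i\<in>S. e i) * (\<Prod>j\<in>{2..<r} - (S \<union> Suc ` S). a j)))"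

definition pi_ev :: "nat \<Rightarrow> (nat \<Rightarrow> 'a::comm_ring_1) \<Rightarrow> (nat \<Rightarrow> 'a) \<Rightarrow> nat \<Rightarrow> 'a" where
  "pi_ev k a e r = alpha_ev k a e (int r) + beta_ev k a e r"

end

theory Submission
  imports Defs
begin

text \<open>The determinant of a tridiagonal matrix is a continuant: it satisfies the three-term
  recurrence \<open>K(n+2) = x K(n+1) + y K(n)\<close> with \<open>y = -b c\<close>, and so do the sums over
  subsets without consecutive elements defining \<open>\<alpha>\<close>. With \<open>k\<close>-periodic coefficients,
  Euler's splitting rule shows that the pair of continuants of lengths \<open>jk+r\<close> starting at
  positions \<open>0\<close> and \<open>1\<close> is multiplied by one fixed \<open>2\<times>2\<close> transfer matrix per period. By
  Cayley-Hamilton, \<open>u(j) = K(jk+r+1)\<close> then obeys \<open>u(j+2) = \<pi> u(j+1) - d u(j)\<close>, where the trace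
  of the transfer matrix is \<open>\<pi> = \<pi>(k,k)\<close> and its determinant, a Casoratian, is \<open>d\<close>; this
  recurrence is solved by the Chebyshev polynomials \<open>U(j) = U\<^sub>j(\<pi>,d)\<close>. The second formula
  follows from \<open>U(m+1) = \<pi> U(m) - d U(m-1)\<close> and a Dodgson-type exchange identity for continuants.\<close>

section \<open>Continuants\<close>

text \<open>\<open>continuant x y s (m + 1)\<close> is the determinant of the \<open>m \<times> m\<close> tridiagonal matrix with diagonal
  \<open>x (s + 1), \<dots>, x (s + m)\<close> and products of opposite off-diagonal entries
  \<open>-y (s + 1), \<dots>, -y (s + m - 1)\<close>; the value \<open>0\<close> at length \<open>0\<close> plays the role of \<open>\<alpha>(-1,k)\<close>.\<close>

fun continuant :: "(nat \<Rightarrow> 'a::comm_ring_1) \<Rightarrow> (nat \<Rightarrow> 'a) \<Rightarrow> nat \<Rightarrow> nat \<Rightarrow> 'a" where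
  "continuant x y s 0 = 0"
| "continuant x y s (Suc 0) = 1"
| "continuant x y s (Suc (Suc n)) = x (s + n + 1) * continuant x y s (Suc n) + y (s + n) * continuant x y s n"

lemma continuant_split:
  "continuant x y s (p + q + 1) = continuant x y s (p + 1) * continuant x y (s + p) (q + 1)
     + y (s + p) * continuant x y s p * continuant x y (s + p + 1) q"
proof (induction q rule: induct_nat_012)
  case (ge2 q)
  have rec: "continuant x y t (m + 2) = x (t + m + 1) * continuant x y t (m + 1) + y (t + m) * continuant x y t m"
    for t m by (simp add: numeral_2_eq_2)
  show ?case
    using rec[of s "p + q + 1"] rec[of "s + p" "q + 1"] rec[of "s + p + 1" q] ge2
    by (simp del: continuant.simps add: numeral_2_eq_2 algebra_simps)
qed (simp_all add: algebra_simps)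

lemma continuant_shift: "continuant (\<lambda>i. x (s + i)) (\<lambda>i. y (s + i)) t n = continuant x y (s + t) n"
  by (induction n rule: induct_nat_012) (simp_all add: add.assoc)

lemma continuant_periodic:
  assumes "\<And>i. x (i + k) = x i" and "\<And>i. y (i + k) = y i"
  shows "continuant x y (s + k) n = continuant x y s n"
proof (induction n rule: induct_nat_012)
  case (ge2 n)
  have "x (s + k + n + 1) = x (s + n + 1)" "y (s + k + n) = y (s + n)"
    using assms by (metis add.commute add.left_commute)+
  with ge2 show ?case by simp
qed simp_all

lemma continuant_cong:
  assumes "\<And>i. s < i \<Longrightarrow> i \<le> s + n \<Longrightarrow> x i = x' i \<and> y i = y' i"
  shows "continuant x y s n = continuant x' y' s n"
  using assms
proof (induction n rule: induct_nat_012)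
  case (ge2 n)
  then show ?case by (cases n) (auto simp: add.commute)
qed simp_all

lemma continuant_casoratian:
  "continuant x y s (n + 2) * continuant x y (s + 1) n - continuant x y s (n + 1) * continuant x y (s + 1) (n + 1)
     = (-1) ^ (n + 1) * (\<Prod>i\<in>{s+1..s+n}. y i)"
proof (induction n)
  case (Suc n)
  let ?K = "continuant x y s" and ?K' = "continuant x y (s + 1)"
  have "?K (Suc n + 2) * ?K' (Suc n) - ?K (Suc n + 1) * ?K' (Suc n + 1)
      = - y (s + n + 1) * (?K (n + 2) * ?K' n - ?K (n + 1) * ?K' (n + 1))"
    by (simp add: numeral_2_eq_2 algebra_simps)
  also have "\<dots> = (-1) ^ (Suc n + 1) * (\<Prod>i\<in>{s+1..s+Suc n}. y i)"
    unfolding Suc.IH by (simp add: prod.nat_ivl_Suc' mult.commute)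
  finally show ?case .
qed (simp add: numeral_2_eq_2)

lemma continuant_exchange:
  assumes "r \<le> N"
  shows "continuant x y s (N + 1) * continuant x y (s + 1) r - continuant x y (s + 1) N * continuant x y s (r + 1)
     = (-1) ^ (r + 1) * (\<Prod>i\<in>{s+1..s+r}. y i) * continuant x y (s + r + 1) (N - r)"
proof (cases r)
  case (Suc p)
  let ?K = "continuant x y s" and ?K' = "continuant x y (s + 1)"
  define Z where "Z = continuant x y (s + r) (N - r + 1)"
  define W where "W = continuant x y (s + r + 1) (N - r)"
  have "?K (N + 1) = ?K (p + 2) * Z + y (s + p + 1) * ?K (p + 1) * W"
    using continuant_split[of x y s "p + 1" "N - r"] assms Suc by (simp add: Z_def W_def numeral_2_eq_2)
  moreover have "?K' N = ?K' (p + 1) * Z + y (s + p + 1) * ?K' p * W"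
    using continuant_split[of x y "s + 1" p "N - r"] assms Suc by (simp add: Z_def W_def)
  ultimately have "?K (N + 1) * ?K' r - ?K' N * ?K (r + 1)
      = - y (s + p + 1) * W * (?K (p + 2) * ?K' p - ?K (p + 1) * ?K' (p + 1))"
    using Suc by (simp add: numeral_2_eq_2 algebra_simps)
  also have "\<dots> = (-1) ^ (r + 1) * (\<Prod>i\<in>{s+1..s+r}. y i) * W"
    unfolding continuant_casoratian using Suc by (simp add: prod.nat_ivl_Suc' algebra_simps)
  finally show ?thesis unfolding W_def .
qed simp

section \<open>Tridiagonal determinants\<close>

lemma tridiag_carrier: "tridiag n a b c \<in> carrier_mat n n"
  unfolding tridiag_def by auto

lemma tridiag_dims [simp]: "dim_row (tridiag n a b c) = n" "dim_col (tridiag n a b c) = n"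
  unfolding tridiag_def by auto

lemma tridiag_index:
  "i < n \<Longrightarrow> j < n \<Longrightarrow> tridiag n a b c $$ (i, j) = (if i = j then a (i + 1)
      else if j = i + 1 then b (i + 1) else if i = j + 1 then c (j + 1) else 0)"
  unfolding tridiag_def by auto

lemma det_tridiag_delete_subdiagonal:
  "det (mat_delete (tridiag (Suc (Suc n)) a b c) (Suc n) n) = b (n + 1) * det (tridiag n a b c)"
proof -
  let ?M = "mat_delete (tridiag (Suc (Suc n)) a b c) (Suc n) n"
  have M: "?M \<in> carrier_mat (Suc n) (Suc n)"
    using mat_delete_carrier[OF tridiag_carrier, of "Suc (Suc n)" a b c "Suc n" n] by simp
  have minor: "mat_delete ?M n n = tridiag n a b c"
    by (rule eq_matI) (auto simp: mat_delete_def tridiag_index tridiag_def)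
  have "det ?M = (\<Sum>i<Suc n. ?M $$ (i, n) * cofactor ?M i n)"
    by (rule laplace_expansion_column[OF M]) simp
  also have "\<dots> = b (n + 1) * cofactor ?M n n"
  proof -
    have "(\<Sum>i<n. ?M $$ (i, n) * cofactor ?M i n) = 0"
      by (rule sum.neutral) (auto simp: mat_delete_def tridiag_index)
    then show ?thesis by (simp add: sum.lessThan_Suc mat_delete_def tridiag_index)
  qed
  also have "cofactor ?M n n = det (tridiag n a b c)"
    unfolding cofactor_def minor by simp
  finally show ?thesis .
qed

lemma det_tridiag: "det (tridiag n a b c) = continuant a (\<lambda>i. - (b i * c i)) 0 (Suc n)"
proof (induction n rule: induct_nat_012)
  case 0
  then show ?case using tridiag_carrier[of 0 a b c] by simp
next
  case 1
  have "det (tridiag 1 a b c) = (\<Sum>j<1. tridiag 1 a b c $$ (0, j) * cofactor (tridiag 1 a b c) 0 j)"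
    by (rule laplace_expansion_row[OF tridiag_carrier]) simp
  then show ?case by (simp add: cofactor_def tridiag_index mat_delete_def)
next
  case (ge2 n)
  let ?T = "tridiag (Suc (Suc n)) a b c"
  have "det ?T = (\<Sum>j<Suc (Suc n). ?T $$ (Suc n, j) * cofactor ?T (Suc n) j)"
    by (rule laplace_expansion_row[OF tridiag_carrier]) simp
  also have "\<dots> = c (n + 1) * cofactor ?T (Suc n) n + a (n + 2) * cofactor ?T (Suc n) (Suc n)"
  proof -
    have "(\<Sum>j<n. ?T $$ (Suc n, j) * cofactor ?T (Suc n) j) = 0"
      by (rule sum.neutral) (auto simp: tridiag_index)
    then show ?thesis by (simp add: sum.lessThan_Suc tridiag_index)
  qed
  finally have row: "det ?T = c (n + 1) * cofactor ?T (Suc n) n + a (n + 2) * cofactor ?T (Suc n) (Suc n)" .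
  have diag_minor: "mat_delete ?T (Suc n) (Suc n) = tridiag (Suc n) a b c"
    by (rule eq_matI) (auto simp: mat_delete_def tridiag_index tridiag_def)
  have "det ?T = a (n + 2) * det (tridiag (Suc n) a b c) - b (n + 1) * c (n + 1) * det (tridiag n a b c)"
    unfolding row cofactor_def diag_minor det_tridiag_delete_subdiagonal by (simp add: algebra_simps)
  also have "\<dots> = continuant a (\<lambda>i. - (b i * c i)) 0 (Suc (Suc (Suc n)))"
    unfolding ge2.IH by (simp del: continuant.simps add: continuant.simps(3)[of _ _ _ "Suc n"])
  finally show ?case .
qed

lemma det_Tk: "det (Tk k n a b c) = continuant (per k a) (per k (\<lambda>i. - (b i * c i))) 0 (Suc n)"
proof -
  have "(\<lambda>i. - (per k b i * per k c i)) = per k (\<lambda>i. - (b i * c i))"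
    unfolding per_def ..
  then show ?thesis
    unfolding Tk_def det_tridiag by simp
qed

lemma no_consec_subsets_Suc:
  assumes "lo \<le> h"
  shows "{S. S \<subseteq> {lo..<Suc h} \<and> no_consec S}
       = {S. S \<subseteq> {lo..<h} \<and> no_consec S} \<union> insert h ` {S. S \<subseteq> {lo..<h - 1} \<and> no_consec S}"
    (is "?L = ?A \<union> insert h ` ?B")
proof (intro equalityI subsetI)
  fix S assume "S \<in> ?L"
  then have S: "S \<subseteq> {lo..<Suc h}" "no_consec S" by auto
  show "S \<in> ?A \<union> insert h ` ?B"
  proof (cases "h \<in> S")
    case False
    with S show ?thesis by (auto simp: less_Suc_eq)
  next
    case True
    have "S - {h} \<subseteq> {lo..<h - 1}"
    proof
      fix j assume j: "j \<in> S - {h}"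
      then have "lo \<le> j" "j < h" using S(1) by (auto simp: less_Suc_eq)
      moreover have "Suc j \<noteq> h" using j True S(2) unfolding no_consec_def by auto
      ultimately show "j \<in> {lo..<h - 1}" by auto
    qed
    moreover have "no_consec (S - {h})" using S(2) unfolding no_consec_def by auto
    moreover have "S = insert h (S - {h})" using True by auto
    ultimately show ?thesis by blast
  qed
next
  fix S assume "S \<in> ?A \<union> insert h ` ?B"
  then show "S \<in> ?L"
  proof
    assume "S \<in> insert h ` ?B"
    then obtain S' where "S' \<subseteq> {lo..<h - 1}" "no_consec S'" "S = insert h S'" by auto
    then show ?thesis using assms unfolding no_consec_def by fastforce
  qed auto
qed

definition no_consec_sum :: "(nat \<Rightarrow> 'a::comm_ring_1) \<Rightarrow> (nat \<Rightarrow> 'a) \<Rightarrow> nat \<Rightarrow> nat \<Rightarrow> 'a" where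
  "no_consec_sum x y lo n = (\<Sum>S\<in>{S. S \<subseteq> {lo..<lo + n - 1} \<and> no_consec S}.
      (\<Prod>i\<in>S. y i) * (\<Prod>j\<in>{lo..<lo + n} - (S \<union> Suc ` S). x j))"

lemma no_consec_sum_Suc_Suc:
  "no_consec_sum x y lo (Suc (Suc n)) = x (lo + n + 1) * no_consec_sum x y lo (Suc n) + y (lo + n) * no_consec_sum x y lo n"
proof -
  let ?A = "{S. S \<subseteq> {lo..<lo + n} \<and> no_consec S}"
  let ?B = "{S. S \<subseteq> {lo..<lo + n - 1} \<and> no_consec S}"
  let ?f = "\<lambda>S. (\<Prod>i\<in>S. y i) * (\<Prod>j\<in>{lo..<lo + Suc (Suc n)} - (S \<union> Suc ` S). x j)"
  have fin: "finite ?A" "finite ?B" by (auto intro: finite_subset[of _ "Pow {lo..<lo + n}"])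
  have inj: "inj_on (insert (lo + n)) ?B"
  proof (rule inj_onI)
    fix S T assume "S \<in> ?B" "T \<in> ?B" "insert (lo + n) S = insert (lo + n) T"
    moreover have "lo + n \<notin> S" "lo + n \<notin> T" using calculation(1,2) by auto
    ultimately show "S = T" by (metis Diff_insert_absorb)
  qed
  have without_top: "?f S = x (lo + n + 1) * ((\<Prod>i\<in>S. y i) * (\<Prod>j\<in>{lo..<lo + Suc n} - (S \<union> Suc ` S). x j))"
    if "S \<in> ?A" for S
  proof -
    have "{lo..<lo + Suc (Suc n)} - (S \<union> Suc ` S) = insert (lo + n + 1) ({lo..<lo + Suc n} - (S \<union> Suc ` S))"
      using that by auto
    then show ?thesis by (simp add: algebra_simps)
  qed
  have with_top: "?f (insert (lo + n) S) = y (lo + n) * ((\<Prod>i\<in>S. y i) * (\<Prod>j\<in>{lo..<lo + n} - (S \<union> Suc ` S). x j))"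
    if "S \<in> ?B" for S
  proof -
    have "finite S" "lo + n \<notin> S" using that by (auto intro: finite_subset)
    moreover have "{lo..<lo + Suc (Suc n)} - (insert (lo + n) S \<union> Suc ` insert (lo + n) S) = {lo..<lo + n} - (S \<union> Suc ` S)"
      using that by auto
    ultimately show ?thesis by (simp add: algebra_simps)
  qed
  have "no_consec_sum x y lo (Suc (Suc n)) = sum ?f (?A \<union> insert (lo + n) ` ?B)"
    unfolding no_consec_sum_def using no_consec_subsets_Suc[of lo "lo + n"] by simp
  also have "\<dots> = sum ?f ?A + sum ?f (insert (lo + n) ` ?B)"
    by (rule sum.union_disjoint) (use fin in auto)
  also have "sum ?f (insert (lo + n) ` ?B) = y (lo + n) * no_consec_sum x y lo n"
    unfolding sum.reindex[OF inj] no_consec_sum_def sum_distrib_left using with_top by (intro sum.cong) auto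
  also have "sum ?f ?A = x (lo + n + 1) * no_consec_sum x y lo (Suc n)"
    unfolding no_consec_sum_def sum_distrib_left using without_top by (intro sum.cong) auto
  finally show ?thesis .
qed

lemma no_consec_sum_eq_continuant: "no_consec_sum x y (Suc s) n = continuant x y s (Suc n)"
proof (induction n rule: induct_nat_012)
  case (ge2 n)
  then show ?case by (simp add: no_consec_sum_Suc_Suc)
qed (simp_all add: no_consec_sum_def no_consec_def Collect_conv_if)

lemma per_eq:
  assumes "1 \<le> i" and "i \<le> k"
  shows "per k v i = v i"
proof -
  have shift: "i + k - 1 = (i - 1) + k"
    using assms by simp
  have "(i + k - 1) mod k = i - 1"
    unfolding shift mod_add_self2 using assms by simp
  then show ?thesis unfolding per_def using assms by simp
qed

lemma per_add_period: "per k v (i + k) = per k v i"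
proof -
  have "i + k + k - 1 = (i + k - 1) + k" by (cases k) auto
  then show ?thesis unfolding per_def by simp
qed

declare alphaN.simps [simp del]

lemma alphaN_eq_continuant:
  assumes "0 < k"
  shows "alphaN k x y r = continuant x y 0 (Suc r)"
proof (induction r rule: less_induct)
  case (less r)
  show ?case
  proof (cases "r \<le> k")
    case True
    have "alpha_sum x y r = no_consec_sum x y 1 r"
      unfolding alpha_sum_def no_consec_sum_def by (simp add: atLeastLessThanSuc_atLeastAtMost)
    with True show ?thesis
      by (subst alphaN.simps) (simp add: no_consec_sum_eq_continuant[of x y 0, simplified])
  next
    case False
    with assms have "r = Suc (Suc (r - 2))"
      by simp
    then obtain q where r: "r = Suc (Suc q)"
      by blast
    have "alphaN k x y r = x r * alphaN k x y (Suc q) + y (Suc q) * alphaN k x y q"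
      using False r by (subst alphaN.simps) simp
    with less.IH[of "Suc q"] less.IH[of q] r show ?thesis
      by simp
  qed
qed

lemma alpha_of_nat_eq_continuant: "0 < k \<Longrightarrow> alpha k x y (int j) = continuant x y 0 (Suc j)"
  unfolding alpha_def by (simp add: alphaN_eq_continuant)

lemma alpha_ev_eq_continuant:
  "0 < k \<Longrightarrow> alpha_ev k a e (int j) = continuant (per k a) (per k e) 0 (Suc j)"
  unfolding alpha_ev_def by (rule alpha_of_nat_eq_continuant)

lemma alpha_shift_ev_eq_continuant:
  assumes "r < k"
  shows "alpha_shift_ev k (r + 1) a e (int k - int r - 2) = continuant (per k a) (per k e) (r + 1) (k - 1 - r)"
proof (cases "r = k - 1")
  case True
  then show ?thesis unfolding alpha_shift_ev_def alpha_def by simp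
next
  case False
  with assms have arg: "int k - int r - 2 = int (k - r - 2)" and len: "Suc (k - r - 2) = k - 1 - r"
    by auto
  have "alpha_shift_ev k (r + 1) a e (int k - int r - 2)
      = continuant (\<lambda>i. per k a (r + 1 + i)) (\<lambda>i. per k e (r + 1 + i)) 0 (Suc (k - r - 2))"
    unfolding alpha_shift_ev_def arg using assms by (intro alpha_of_nat_eq_continuant) simp
  then show ?thesis
    unfolding continuant_shift len by simp
qed

lemma beta_ev_diag:
  assumes "0 < k"
  shows "beta_ev k a e k = e k * continuant a e 1 (k - 1)"
proof (cases "k < 2")
  case True
  with assms show ?thesis unfolding beta_ev_def by simp
next
  case False
  then have "{2..<k - 1} = {2..<2 + (k - 2) - 1}" "{2..<k} = {2..<2 + (k - 2)}" "Suc (k - 2) = k - 1"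
    by auto
  with False have "beta_ev k a e k = e k * no_consec_sum a e 2 (k - 2)"
    unfolding beta_ev_def no_consec_sum_def sum_distrib_left by (simp add: mult.assoc)
  then show ?thesis
    using no_consec_sum_eq_continuant[of a e 1 "k - 2"] \<open>Suc (k - 2) = k - 1\<close>
    by (simp add: numeral_2_eq_2)
qed

text \<open>Trace and determinant of the transfer matrix over one period.\<close>

definition period_trace :: "(nat \<Rightarrow> 'a::comm_ring_1) \<Rightarrow> (nat \<Rightarrow> 'a) \<Rightarrow> nat \<Rightarrow> 'a" where
  "period_trace x y k = continuant x y 0 (k + 1) + y k * continuant x y 1 (k - 1)"

definition period_det :: "(nat \<Rightarrow> 'a::comm_ring_1) \<Rightarrow> nat \<Rightarrow> 'a" where
  "period_det y k = (-1) ^ k * (\<Prod>i\<in>{1..k}. y i)"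

lemma pi_ev_eq_period_trace:
  assumes "0 < k"
  shows "pi_ev k a e k = period_trace (per k a) (per k e) k"
proof -
  have "continuant a e 1 (k - 1) = continuant (per k a) (per k e) 1 (k - 1)"
    by (rule continuant_cong) (auto simp: per_eq)
  with assms show ?thesis
    unfolding pi_ev_def period_trace_def
    by (simp add: alpha_ev_eq_continuant beta_ev_diag per_eq)
qed

section \<open>Chebyshev polynomials\<close>

definition Ucheb_term :: "'a::comm_ring_1 \<Rightarrow> 'a \<Rightarrow> nat \<Rightarrow> nat \<Rightarrow> 'a" where
  "Ucheb_term x y m i = (-1) ^ i * of_nat ((m - i) choose i) * x ^ (m - 2 * i) * y ^ i"

lemma Ucheb_term_eq_0: "m < 2 * i \<Longrightarrow> Ucheb_term x y m i = 0"
  unfolding Ucheb_term_def by (simp add: binomial_eq_0)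

lemma Ucheb_Suc_eq_sum:
  assumes "m \<le> N"
  shows "Ucheb (Suc m) x y = (\<Sum>i\<le>N. Ucheb_term x y m i)"
proof -
  have "Ucheb (Suc m) x y = (\<Sum>i\<in>{0..m div 2}. Ucheb_term x y m i)"
    unfolding Ucheb_def Ucheb_term_def by simp
  also have "\<dots> = (\<Sum>i\<le>N. Ucheb_term x y m i)"
    by (rule sum.mono_neutral_left) (use assms in \<open>auto intro!: Ucheb_term_eq_0\<close>)
  finally show ?thesis .
qed

lemma Ucheb_term_Suc_Suc:
  "Ucheb_term x y (Suc (Suc m)) (Suc i) = x * Ucheb_term x y (Suc m) (Suc i) - y * Ucheb_term x y m i"
proof (cases "i \<le> m")
  case True
  then obtain p where m: "m = i + p" using le_Suc_ex by blast
  have pascal: "of_nat (Suc p choose Suc i) = (of_nat (p choose Suc i) + of_nat (p choose i) :: 'a)"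
    by simp
  have power: "x ^ (p - i) = x * x ^ (p - Suc i)" if "i < p"
    using that by (metis Suc_diff_Suc power_Suc)
  have vanish: "p choose Suc i = 0" if "\<not> i < p"
    using that by (simp add: binomial_eq_0)
  show ?thesis
    unfolding Ucheb_term_def m by (cases "i < p") (simp_all add: pascal power vanish algebra_simps)
next
  case False
  then show ?thesis by (simp add: Ucheb_term_eq_0)
qed

lemma Ucheb_Suc_Suc: "Ucheb (Suc (Suc n)) x y = x * Ucheb (Suc n) x y - y * Ucheb n x y"
proof (cases n)
  case 0
  then show ?thesis by (simp add: Ucheb_def)
next
  case (Suc m)
  let ?T = "Ucheb_term x y"
  have "Ucheb (Suc (Suc n)) x y = (\<Sum>i\<le>Suc n. ?T (Suc n) i)"
    by (rule Ucheb_Suc_eq_sum) simp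
  also have "\<dots> = ?T (Suc n) 0 + (\<Sum>i\<le>n. ?T (Suc n) (Suc i))"
    by (rule sum.atMost_Suc_shift)
  also have "\<dots> = x * (?T n 0 + (\<Sum>i\<le>n. ?T n (Suc i))) - y * (\<Sum>i\<le>n. ?T m i)"
    unfolding Suc Ucheb_term_Suc_Suc by (simp add: Ucheb_term_def sum_subtractf sum_distrib_left algebra_simps)
  also have "?T n 0 + (\<Sum>i\<le>n. ?T n (Suc i)) = Ucheb (Suc n) x y"
    using sum.atMost_Suc_shift[of "?T n" n] Ucheb_Suc_eq_sum[of n "Suc n" x y] by simp
  also have "(\<Sum>i\<le>n. ?T m i) = Ucheb n x y"
    unfolding Suc by (rule Ucheb_Suc_eq_sum[symmetric]) simp
  finally show ?thesis .
qed

lemma Ucheb_solves_recurrence: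
  fixes u :: "nat \<Rightarrow> 'a::comm_ring_1"
  assumes "\<And>j. u (Suc (Suc j)) = t * u (Suc j) - d * u j"
  shows "u (Suc j) = Ucheb (Suc j) t d * u 1 - d * Ucheb j t d * u 0"
proof (induction j rule: induct_nat_012)
  case (ge2 j)
  have "u (Suc (Suc (Suc j))) = t * u (Suc (Suc j)) - d * u (Suc j)"
    by (rule assms)
  also have "\<dots> = (t * Ucheb (Suc (Suc j)) t d - d * Ucheb (Suc j) t d) * u 1
      - d * (t * Ucheb (Suc j) t d - d * Ucheb j t d) * u 0"
    unfolding ge2 by (simp add: algebra_simps)
  finally show ?case
    unfolding Ucheb_Suc_Suc .
qed (simp_all add: Ucheb_def assms)

section \<open>Periodic continuants\<close>

text \<open>Cayley-Hamilton for the matrix \<open>[[A, B], [C, D]]\<close>.\<close>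

lemma coupled_recurrence_elim:
  fixes u v :: "nat \<Rightarrow> 'a::comm_ring_1"
  assumes "\<And>j. u (Suc j) = A * u j + B * v j" and "\<And>j. v (Suc j) = C * u j + D * v j"
  shows "u (Suc (Suc j)) = (A + D) * u (Suc j) - (A * D - B * C) * u j"
  using assms[of "Suc j"] assms[of j] by (simp add: algebra_simps)

lemma periodic_continuant_recurrence:
  fixes x y :: "nat \<Rightarrow> 'a::comm_ring_1" and r :: nat
  assumes k: "0 < k" and px: "\<And>i. x (i + k) = x i" and py: "\<And>i. y (i + k) = y i"
  defines "u \<equiv> \<lambda>j. continuant x y 0 (j * k + r + 1)"
  shows "u (Suc (Suc j)) = period_trace x y k * u (Suc j) - period_det y k * u j"
proof -
  define v where "v j = continuant x y 1 (j * k + r)" for j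
  define A where "A = continuant x y 0 (k + 1)"
  define B where "B = y k * continuant x y 0 k"
  define C where "C = continuant x y 1 k"
  define D where "D = y k * continuant x y 1 (k - 1)"
  have period: "continuant x y k n = continuant x y 0 n" "continuant x y (Suc k) n = continuant x y 1 n" for n
    using continuant_periodic[of x k y 0 n] continuant_periodic[of x k y 1 n] px py by (simp_all add: add.commute)
  have "u (Suc j) = A * u j + B * v j" for j
    using continuant_split[of x y 0 k "j * k + r"]
    by (simp add: u_def v_def A_def B_def period add.assoc add.left_commute)
  moreover have "v (Suc j) = C * u j + D * v j" for j
    using continuant_split[of x y 1 "k - 1" "j * k + r"] k
    by (simp add: u_def v_def C_def D_def period add.assoc add.left_commute)
  ultimately have "u (Suc (Suc j)) = (A + D) * u (Suc j) - (A * D - B * C) * u j"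
    by (rule coupled_recurrence_elim)
  moreover have "A + D = period_trace x y k"
    unfolding A_def D_def period_trace_def ..
  moreover have "A * D - B * C = period_det y k"
  proof -
    obtain p where p: "k = Suc p"
      using k gr0_implies_Suc by blast
    have "A * D - B * C = y k * (continuant x y 0 (p + 2) * continuant x y (0 + 1) p
        - continuant x y 0 (p + 1) * continuant x y (0 + 1) (p + 1))"
      unfolding A_def B_def C_def D_def p by (simp add: algebra_simps)
    also have "\<dots> = period_det y k"
      unfolding continuant_casoratian period_det_def p by (simp add: prod.nat_ivl_Suc' algebra_simps)
    finally show ?thesis .
  qed
  ultimately show ?thesis by simp
qed

lemma periodic_continuant_Ucheb:
  fixes x y :: "nat \<Rightarrow> 'a::comm_ring_1"
  assumes "0 < k" and "\<And>i. x (i + k) = x i" and "\<And>i. y (i + k) = y i"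
  defines "U \<equiv> \<lambda>j. Ucheb j (period_trace x y k) (period_det y k)"
  shows "continuant x y 0 (Suc j * k + r + 1)
      = U (Suc j) * continuant x y 0 (k + r + 1) - period_det y k * U j * continuant x y 0 (r + 1)"
  using Ucheb_solves_recurrence[where u = "\<lambda>j. continuant x y 0 (j * k + r + 1)",
      OF periodic_continuant_recurrence[where x = x and y = y and k = k, OF assms(1-3)]]
  unfolding U_def by simp

lemma periodic_continuant_remainder:
  fixes x y :: "nat \<Rightarrow> 'a::comm_ring_1"
  assumes k: "0 < k" and px: "\<And>i. x (i + k) = x i" and py: "\<And>i. y (i + k) = y i" and "r < k"
  shows "continuant x y 0 (k + r + 1) - period_trace x y k * continuant x y 0 (r + 1)
      = (-1) ^ (r + 1) * y k * (\<Prod>i\<in>{1..r}. y i) * continuant x y (r + 1) (k - 1 - r)"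
proof -
  have "continuant x y 0 (k + r + 1)
      = continuant x y 0 (k + 1) * continuant x y 0 (r + 1) + y k * continuant x y 0 k * continuant x y 1 r"
    using continuant_split[of x y 0 k r] continuant_periodic[of x k y 0] continuant_periodic[of x k y 1] px py
    by (simp add: add.commute)
  then have "continuant x y 0 (k + r + 1) - period_trace x y k * continuant x y 0 (r + 1)
      = y k * (continuant x y 0 (k - 1 + 1) * continuant x y (0 + 1) r
               - continuant x y (0 + 1) (k - 1) * continuant x y 0 (r + 1))"
    using k unfolding period_trace_def by (simp add: algebra_simps)
  also have "\<dots> = y k * ((-1) ^ (r + 1) * (\<Prod>i\<in>{0+1..0+r}. y i) * continuant x y (0 + r + 1) (k - 1 - r))"
    using assms by (subst continuant_exchange) simp_all
  finally show ?thesis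
    by (simp add: algebra_simps)
qed

lemma periodic_continuant_Ucheb_remainder:
  fixes x y :: "nat \<Rightarrow> 'a::comm_ring_1"
  assumes "0 < k" and "\<And>i. x (i + k) = x i" and "\<And>i. y (i + k) = y i" and "r < k"
  defines "U \<equiv> \<lambda>j. Ucheb j (period_trace x y k) (period_det y k)"
  shows "continuant x y 0 (Suc j * k + r + 1)
      = U (Suc (Suc j)) * continuant x y 0 (r + 1)
        + (-1) ^ (r + 1) * y k * (\<Prod>i\<in>{1..r}. y i) * U (Suc j) * continuant x y (r + 1) (k - 1 - r)"
proof -
  have "continuant x y 0 (Suc j * k + r + 1)
      = U (Suc j) * continuant x y 0 (k + r + 1) - period_det y k * U j * continuant x y 0 (r + 1)"
    unfolding U_def by (rule periodic_continuant_Ucheb[where x = x and y = y and k = k, OF assms(1-3)])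
  also have "\<dots> = (period_trace x y k * U (Suc j) - period_det y k * U j) * continuant x y 0 (r + 1)
      + U (Suc j) * (continuant x y 0 (k + r + 1) - period_trace x y k * continuant x y 0 (r + 1))"
    by (simp add: algebra_simps)
  finally show ?thesis
    unfolding periodic_continuant_remainder[where x = x and y = y and k = k, OF assms(1-4)]
    unfolding U_def Ucheb_Suc_Suc by (simp add: algebra_simps)
qed

theorem theorem5p4:
  fixes a b c :: "nat \<Rightarrow> 'a::comm_ring_1" and k n :: nat
  assumes "0 < k" and "k < n"
  defines "dd \<equiv> (\<lambda>i. b i * c i)"
  defines "e \<equiv> (\<lambda>i. - dd i)"
  defines "d \<equiv> (\<Prod>i\<in>{1..k}. dd i)"
  defines "U \<equiv> (\<lambda>i. Ucheb i (pi_ev k a e k) d)"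
  defines "m \<equiv> n div k" and "r \<equiv> n mod k"
  shows "det (Tk k n a b c)
           = U m * alpha_ev k a e (int (k + r)) - d * U (m - 1) * alpha_ev k a e (int r)
       \<and> det (Tk k n a b c)
           = U (m + 1) * alpha_ev k a e (int r)
             + dd k * (\<Prod>i\<in>{1..r}. dd i) * U m
               * alpha_shift_ev k (r + 1) a e (int k - int r - 2)
       \<and> (r = k - 1 \<longrightarrow>
            det (Tk k n a b c) = U (m + 1) * det (Tk k (k - 1) a b c)
          \<and> U (m + 1) * det (Tk k (k - 1) a b c) = U (m + 1) * alpha_ev k a e (int (k - 1)))"
proof -
  let ?x = "per k a" and ?y = "per k e"
  have k: "0 < k" and r: "r < k"
    using assms(1) unfolding r_def by simp_all
  have period: "?x (i + k) = ?x i" "?y (i + k) = ?y i" for i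
    by (simp_all add: per_add_period)
  have minus_dd: "dd i = - ?y i" if "1 \<le> i" "i \<le> k" for i
    using that by (simp add: per_eq e_def)
  have det: "det (Tk k n' a b c) = continuant ?x ?y 0 (Suc n')" for n'
    unfolding det_Tk e_def dd_def ..
  have d: "d = period_det ?y k"
    unfolding d_def period_det_def by (simp add: minus_dd prod_uminus)
  have U: "U = (\<lambda>i. Ucheb i (period_trace ?x ?y k) (period_det ?y k))"
    unfolding U_def d pi_ev_eq_period_trace[OF k] ..
  obtain j where m: "m = Suc j" and n: "n = Suc j * k + r"
    using assms(1,2) unfolding m_def r_def
    by (metis div_greater_zero_iff div_mult_mod_eq gr0_implies_Suc less_imp_le mult.commute)
  have "dd k * (\<Prod>i\<in>{1..r}. dd i) = (-1) ^ (r + 1) * ?y k * (\<Prod>i\<in>{1..r}. ?y i)"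
    using r by (simp add: minus_dd prod_uminus)
  then have second: "det (Tk k n a b c) = U (m + 1) * continuant ?x ?y 0 (r + 1)
      + dd k * (\<Prod>i\<in>{1..r}. dd i) * U m * continuant ?x ?y (r + 1) (k - 1 - r)"
    unfolding det n U m using periodic_continuant_Ucheb_remainder[where x = ?x and y = ?y, OF k period r] by simp
  show ?thesis
  proof (intro conjI impI)
    show "det (Tk k n a b c) = U m * alpha_ev k a e (int (k + r)) - d * U (m - 1) * alpha_ev k a e (int r)"
      unfolding det n U d m alpha_ev_eq_continuant[OF k]
      using periodic_continuant_Ucheb[where x = ?x and y = ?y, OF k period] by simp
    show "det (Tk k n a b c) = U (m + 1) * alpha_ev k a e (int r)
        + dd k * (\<Prod>i\<in>{1..r}. dd i) * U m * alpha_shift_ev k (r + 1) a e (int k - int r - 2)"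
      unfolding second alpha_ev_eq_continuant[OF k] alpha_shift_ev_eq_continuant[OF r] by simp
    assume "r = k - 1"
    with k second show "det (Tk k n a b c) = U (m + 1) * det (Tk k (k - 1) a b c)"
      unfolding det by simp
    show "U (m + 1) * det (Tk k (k - 1) a b c) = U (m + 1) * alpha_ev k a e (int (k - 1))"
      unfolding det alpha_ev_eq_continuant[OF k] ..
  qed
qed

end
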